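(* Let $\mathfrak P$ be a prime ideal of $\mathcal O$ over $\mathfrak p$ and $n_\mathfrak P=\deg f_\mathfrak P$. Let $g_0=1,g_1,\dots,g_{n_\mathfrak P-1}\in A[x]$ be such that each $g_m$ is a divisor polynomial of degree $m$ of $f_\mathfrak P$ (e.g. the set ${\mathcal B}_\mathfrak P$ of the paper, built from an Okutsu frame). Then the family $\{g_0(\theta),g_1(\theta),\dots,g_{n_\mathfrak P-1}(\theta)\}\subset L$ is $w_\mathfrak P$-reduced.
   Context: Let $A$ be a Dedekind domain with fraction field $K$, $\mathfrak p$ a nonzero prime ideal of $A$ with discrete valuation $v_\mathfrak p$, $K_\mathfrak p$ the completion, $\hat A_\mathfrak p$ its valuation ring, $\hat v$ the extension of $v_\mathfrak p$ to $\overline K_\mathfrak p$. Let $f\in A[x]$ be monic irreducible separable, $\theta$ a root, $L=K(\theta)$, $\mathcal O$ the integral closure of $A$ in $L$. For a prime $\mathfrak P$ of $\mathcal O$ over $\mathfrak p$ with ramification index $e=e(\mathfrak P/\mathfrak p)$, let $v_\mathfrak P$ be its normalized discrete valuation on $L$ and $w_\mathfrak P:=v_\mathfrak P/e$; let $f_\mathfrak P$ be the corresponding monic irreducible factor of $f$ in $\hat A_\mathfrak p[x]$ and $\theta_\mathfrak P$ a root of it, so that $w_\mathfrak P(g(\theta))=\hat v(g(\theta_\mathfrak P))$ for $g\in A[x]$. For $g=\sum c_kx^k\in K_\mathfrak p[x]$, $v_0(g)=\min_k v_\mathfrak p(c_k)$. A divisor polynomial of degree $m$ ($0\le m<\deg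 f_\mathfrak P$) of $f_\mathfrak P$ is a monic $g_m\in\hat A_\mathfrak p[x]$ of degree $m$ with $\hat v(g_m(\theta_\mathfrak P))\ge\hat v(g(\theta_\mathfrak P))-v_0(g)$ for all $g\in\hat A_\mathfrak p[x]$ of degree $m$. A finite family ${\mathcal B}$ of elements of $L$ is $w$-reduced (for a map $w:L\to\mathbb Q\cup\{\infty\}$) if $w(\sum_{b\in{\mathcal B}}\lambda_b b)=\min_{b}w(\lambda_b b)$ for all $\lambda_b\in K$. *)

theory Defs
  imports "HOL-Computational_Algebra.Polynomial" "HOL-Library.Extended_Real"
begin

definition subring_set :: "'a::field set \<Rightarrow> bool" where
  "subring_set S \<longleftrightarrow> 0 \<in> S \<and> 1 \<in> S \<and>
     (\<forall>x\<in>S. \<forall>y\<in>S. x + y \<in> S \<and> x - y \<in> S \<and> x * y \<in> S)"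

definition subfield_set :: "'a::field set \<Rightarrow> bool" where
  "subfield_set S \<longleftrightarrow> subring_set S \<and> (\<forall>x\<in>S. x \<noteq> 0 \<longrightarrow> inverse x \<in> S)"

definition ideal_in :: "'a::field set \<Rightarrow> 'a set \<Rightarrow> bool" where
  "ideal_in R I \<longleftrightarrow> I \<subseteq> R \<and> 0 \<in> I \<and> (\<forall>x\<in>I. \<forall>y\<in>I. x + y \<in> I)
     \<and> (\<forall>a\<in>R. \<forall>x\<in>I. a * x \<in> I)"

definition prime_ideal_in :: "'a::field set \<Rightarrow> 'a set \<Rightarrow> bool" where
  "prime_ideal_in R I \<longleftrightarrow> ideal_in R I \<and> I \<noteq> R \<and>
     (\<forall>a\<in>R. \<forall>b\<in>R. a * b \<in> I \<longrightarrow> a \<in> I \<or> b \<in> I)"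

definition maximal_ideal_in :: "'a::field set \<Rightarrow> 'a set \<Rightarrow> bool" where
  "maximal_ideal_in R I \<longleftrightarrow> ideal_in R I \<and> I \<noteq> R \<and>
     (\<forall>J. ideal_in R J \<and> I \<subseteq> J \<longrightarrow> J = I \<or> J = R)"

definition noetherian_set :: "'a::field set \<Rightarrow> bool" where
  "noetherian_set R \<longleftrightarrow> (\<forall>C :: nat \<Rightarrow> 'a set.
     (\<forall>n. ideal_in R (C n) \<and> C n \<subseteq> C (Suc n)) \<longrightarrow> (\<exists>N. \<forall>n\<ge>N. C n = C N))"

definition integral_over :: "'a::field set \<Rightarrow> 'a \<Rightarrow> bool" where
  "integral_over R x \<longleftrightarrow> (\<exists>q. lead_coeff q = 1 \<and> set (coeffs q) \<subseteq> R \<and> poly q x = 0)"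

text \<open>Integral closure of R in the ambient field (used with ambient field L = K(theta)).\<close>
definition integral_closure :: "'a::field set \<Rightarrow> 'a set" where
  "integral_closure R = {x. integral_over R x}"

definition dedekind_domain_frac :: "'a::field set \<Rightarrow> 'a set \<Rightarrow> bool" where
  "dedekind_domain_frac A K \<longleftrightarrow> subring_set A \<and> subfield_set K \<and> A \<subseteq> K \<and>
     (\<forall>k\<in>K. \<exists>a\<in>A. \<exists>b\<in>A. b \<noteq> 0 \<and> k = a / b) \<and>
     noetherian_set A \<and>
     (\<forall>x\<in>K. integral_over A x \<longrightarrow> x \<in> A) \<and>
     (\<forall>P. prime_ideal_in A P \<and> P \<noteq> {0} \<longrightarrow> maximal_ideal_in A P)"

definition localization :: "'a::field set \<Rightarrow> 'a set \<Rightarrow> 'a set" where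
  "localization R P = {a / s | a s. a \<in> R \<and> s \<in> R - P}"

definition normalized_dv :: "'a::field set \<Rightarrow> ('a \<Rightarrow> ereal) \<Rightarrow> bool" where
  "normalized_dv S v \<longleftrightarrow>
     (\<forall>x\<in>S. v x = \<infinity> \<longleftrightarrow> x = 0) \<and>
     (\<forall>x\<in>S - {0}. \<exists>k::int. v x = ereal (of_int k)) \<and>
     (\<forall>x\<in>S. \<forall>y\<in>S. v (x * y) = v x + v y \<and> min (v x) (v y) \<le> v (x + y)) \<and>
     (\<exists>x\<in>S. v x = 1)"

definition rat_valuation :: "('a::field \<Rightarrow> ereal) \<Rightarrow> bool" where
  "rat_valuation v \<longleftrightarrow>
     (\<forall>x. v x = \<infinity> \<longleftrightarrow> x = 0) \<and>
     (\<forall>x. x \<noteq> 0 \<longrightarrow> (\<exists>q::rat. v x = ereal (of_rat q))) \<and>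
     (\<forall>x y. v (x * y) = v x + v y \<and> min (v x) (v y) \<le> v (x + y))"

text \<open>The valuation ring of v restricted to a subfield S (e.g. hat A_p inside K_p).\<close>
definition val_ring :: "'a set \<Rightarrow> ('a \<Rightarrow> ereal) \<Rightarrow> 'a set" where
  "val_ring S v = {x\<in>S. 0 \<le> v x}"

definition v0 :: "('a::zero \<Rightarrow> ereal) \<Rightarrow> 'a poly \<Rightarrow> ereal" where
  "v0 v g = Min (v ` set (coeffs g))"

definition cauchy_wrt :: "('a::field \<Rightarrow> ereal) \<Rightarrow> (nat \<Rightarrow> 'a) \<Rightarrow> bool" where
  "cauchy_wrt v s \<longleftrightarrow> (\<forall>N::int. \<exists>M. \<forall>i\<ge>M. \<forall>j\<ge>M. ereal (of_int N) \<le> v (s i - s j))"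

definition converges_wrt :: "('a::field \<Rightarrow> ereal) \<Rightarrow> (nat \<Rightarrow> 'a) \<Rightarrow> 'a \<Rightarrow> bool" where
  "converges_wrt v s c \<longleftrightarrow> (\<forall>N::int. \<exists>M. \<forall>i\<ge>M. ereal (of_int N) \<le> v (s i - c))"

text \<open>Kp (a subfield of the ambient field Omega, with valuation vhat) is the completion of
  K (embedded by emb) with respect to vp; Omega is an algebraic closure of Kp, and vhat
  extends vp.\<close>
definition completion_setup ::
  "'l::field set \<Rightarrow> ('l \<Rightarrow> ereal) \<Rightarrow> 'c::field set \<Rightarrow> ('l \<Rightarrow> 'c) \<Rightarrow> ('c \<Rightarrow> ereal) \<Rightarrow> bool" where
  "completion_setup K vp Kp emb vhat \<longleftrightarrow>
     subfield_set Kp \<and> rat_valuation vhat \<and>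
     (\<forall>a\<in>K. emb a \<in> Kp) \<and> inj_on emb K \<and> emb 0 = 0 \<and> emb 1 = 1 \<and>
     (\<forall>a\<in>K. \<forall>b\<in>K. emb (a + b) = emb a + emb b \<and> emb (a * b) = emb a * emb b) \<and>
     (\<forall>a\<in>K. vhat (emb a) = vp a) \<and>
     (\<forall>c\<in>Kp. \<forall>N::int. \<exists>a\<in>K. ereal (of_int N) \<le> vhat (c - emb a)) \<and>
     (\<forall>s. (\<forall>i. s i \<in> Kp) \<and> cauchy_wrt vhat s \<longrightarrow> (\<exists>c\<in>Kp. converges_wrt vhat s c)) \<and>
     (\<forall>q::'c poly. degree q > 0 \<longrightarrow> (\<exists>x. poly q x = 0)) \<and>
     (\<forall>x::'c. \<exists>q. q \<noteq> 0 \<and> set (coeffs q) \<subseteq> Kp \<and> poly q x = 0)"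

definition irreducible_over :: "'a::field set \<Rightarrow> 'a poly \<Rightarrow> bool" where
  "irreducible_over S p \<longleftrightarrow> set (coeffs p) \<subseteq> S \<and> degree p > 0 \<and>
     (\<forall>q r. set (coeffs q) \<subseteq> S \<and> set (coeffs r) \<subseteq> S \<and> p = q * r \<longrightarrow>
        degree q = 0 \<or> degree r = 0)"

definition divisor_polynomial ::
  "'c::field set \<Rightarrow> ('c \<Rightarrow> ereal) \<Rightarrow> 'c poly \<Rightarrow> 'c \<Rightarrow> nat \<Rightarrow> 'c poly \<Rightarrow> bool" where
  "divisor_polynomial Kp vhat fP thetaP m g \<longleftrightarrow>
     m < degree fP \<and> lead_coeff g = 1 \<and> degree g = m \<and>
     set (coeffs g) \<subseteq> val_ring Kp vhat \<and>
     (\<forall>h. h \<noteq> 0 \<and> set (coeffs h) \<subseteq> val_ring Kp vhat \<and> degree h = m \<longrightarrow>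
        vhat (poly h thetaP) - v0 vhat h \<le> vhat (poly g thetaP))"

definition w_reduced :: "('l::field \<Rightarrow> ereal) \<Rightarrow> 'l set \<Rightarrow> 'i set \<Rightarrow> ('i \<Rightarrow> 'l) \<Rightarrow> bool" where
  "w_reduced w K I b \<longleftrightarrow> (\<forall>c. (\<forall>i\<in>I. c i \<in> K) \<longrightarrow>
      w (\<Sum>i\<in>I. c i * b i) = (MIN i\<in>I. w (c i * b i)))"

end

theory Submission
  imports Defs
begin

text \<open>Over the completion the argument is an induction on the length of the sum
  \<open>\<Sum>\<^sub>j b\<^sub>j g\<^sub>j(\<theta>\<^sub>P)\<close> with integral coefficients \<open>b\<^sub>j\<close>. Writing a partial sum as \<open>h(\<theta>\<^sub>P)\<close>
  with \<open>h = \<Sum>\<^sub>j\<^sub>\<le>\<^sub>k b\<^sub>j g\<^sub>j\<close> of degree \<open>k\<close> and leading coefficient \<open>b\<^sub>k\<close>, the divisor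
  property of \<open>g\<^sub>k\<close> gives \<open>v(h(\<theta>\<^sub>P)) \<le> v(b\<^sub>k) + v(g\<^sub>k(\<theta>\<^sub>P))\<close>: the sum is never more
  valuable than its last summand, so the ultrametric inequality is an equality.
  Integral coefficients from \<open>A\<close> are transported to the completion by the correspondence
  between \<open>w\<^sub>P\<close> and the valuation \<open>v\<close> of the completion, and arbitrary coefficients
  from \<open>K\<close> are reduced to integral ones by a common denominator.\<close>

lemma subring_sum_closed:
  assumes "subring_set R" "\<forall>i\<in>I. f i \<in> R"
  shows "sum f I \<in> R"
  using assms(2) by (induction I rule: infinite_finite_induct)
    (use assms(1) in \<open>auto simp: subring_set_def\<close>)

lemma subring_prod_closed:
  assumes "subring_set R" "\<forall>i\<in>I. f i \<in> R"
  shows "prod f I \<in> R"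
  using assms(2) by (induction I rule: infinite_finite_induct)
    (use assms(1) in \<open>auto simp: subring_set_def\<close>)

lemma coeffs_subset_iff: "0 \<in> R \<Longrightarrow> set (coeffs p) \<subseteq> R \<longleftrightarrow> (\<forall>i. coeff p i \<in> R)"
proof -
  assume "0 \<in> R"
  then have "set (coeffs p) \<subseteq> R \<longleftrightarrow> range (coeff p) \<subseteq> R" using range_coeff[of p] by auto
  then show ?thesis by auto
qed

lemma coeffs_sum_smult_subset:
  assumes R: "subring_set R" and "\<forall>i<n. a i \<in> R" "\<forall>i<n. set (coeffs (g i)) \<subseteq> R"
  shows "set (coeffs (\<Sum>i<n. smult (a i) (g i))) \<subseteq> R"
proof -
  have R0: "0 \<in> R" using R by (simp add: subring_set_def)
  show ?thesis
    using assms R0 unfolding coeffs_subset_iff[OF R0] coeff_sum coeff_smult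
    by (auto intro!: subring_sum_closed[OF R] simp: subring_set_def)
qed

lemma additive_on_sum:
  assumes R: "subring_set R" and "\<phi> 0 = 0" and add: "\<forall>x\<in>R. \<forall>y\<in>R. \<phi> (x + y) = \<phi> x + \<phi> y"
    and f: "\<forall>i\<in>I. f i \<in> R"
  shows "\<phi> (sum f I) = (\<Sum>i\<in>I. \<phi> (f i))"
  using f
proof (induction I rule: infinite_finite_induct)
  case (insert i I)
  then show ?case using add subring_sum_closed[OF R, of I f] by simp
qed (simp_all add: \<open>\<phi> 0 = 0\<close>)

lemma map_poly_sum_smult:
  assumes R: "subring_set R" and "\<phi> 0 = 0"
    and hom: "\<forall>x\<in>R. \<forall>y\<in>R. \<phi> (x + y) = \<phi> x + \<phi> y \<and> \<phi> (x * y) = \<phi> x * \<phi> y"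
    and a: "\<forall>i<n. a i \<in> R" and g: "\<forall>i<n. set (coeffs (g i)) \<subseteq> R"
  shows "map_poly \<phi> (\<Sum>i<n. smult (a i) (g i)) = (\<Sum>i<n. smult (\<phi> (a i)) (map_poly \<phi> (g i)))"
proof (rule poly_eqI)
  fix k
  have R0: "0 \<in> R" using R by (simp add: subring_set_def)
  have coeff_R: "coeff (g i) k \<in> R" if "i < n" for i
    using g that coeffs_subset_iff[OF R0] by blast
  have "\<phi> (\<Sum>i<n. a i * coeff (g i) k) = (\<Sum>i<n. \<phi> (a i * coeff (g i) k))"
    using a coeff_R R hom \<open>\<phi> 0 = 0\<close> by (intro additive_on_sum) (auto simp: subring_set_def)
  also have "\<dots> = (\<Sum>i<n. \<phi> (a i) * \<phi> (coeff (g i) k))"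
    using a coeff_R hom by (intro sum.cong) auto
  finally show "coeff (map_poly \<phi> (\<Sum>i<n. smult (a i) (g i))) k
      = coeff (\<Sum>i<n. smult (\<phi> (a i)) (map_poly \<phi> (g i))) k"
    by (simp add: coeff_map_poly coeff_sum \<open>\<phi> 0 = 0\<close>)
qed

lemma subset_localization:
  assumes "subring_set R" "prime_ideal_in R I"
  shows "R \<subseteq> localization R I"
proof
  fix a assume "a \<in> R"
  have "1 \<notin> I"
  proof
    assume "1 \<in> I"
    then have "R \<subseteq> I"
      using assms(2) unfolding prime_ideal_in_def ideal_in_def by (metis mult.right_neutral subsetI)
    then show False using assms(2) unfolding prime_ideal_in_def ideal_in_def by auto
  qed
  then show "a \<in> localization R I"
    using \<open>a \<in> R\<close> assms(1) unfolding localization_def subring_set_def by force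
qed

lemma rat_valuation_zero: "rat_valuation v \<Longrightarrow> v 0 = \<infinity>"
  unfolding rat_valuation_def by blast

lemma rat_valuation_mult: "rat_valuation v \<Longrightarrow> v (x * y) = v x + v y"
  unfolding rat_valuation_def by blast

lemma rat_valuation_add: "rat_valuation v \<Longrightarrow> min (v x) (v y) \<le> v (x + y)"
  unfolding rat_valuation_def by blast

lemma rat_valuation_finite: "rat_valuation v \<Longrightarrow> x \<noteq> 0 \<Longrightarrow> \<bar>v x\<bar> \<noteq> \<infinity>"
  unfolding rat_valuation_def by fastforce

lemma rat_valuation_neq_MInfty: "rat_valuation v \<Longrightarrow> v x \<noteq> -\<infinity>"
  using rat_valuation_finite[of v x] rat_valuation_zero[of v] by (cases "x = 0") auto

lemma rat_valuation_one:
  assumes "rat_valuation v" shows "v 1 = 0"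
proof -
  have "v 1 = v 1 + v 1" using rat_valuation_mult[OF assms, of 1 1] by simp
  then show ?thesis using rat_valuation_finite[OF assms, of 1] by (cases "v 1") auto
qed

lemma rat_valuation_uminus:
  assumes "rat_valuation v" shows "v (- x) = v x"
proof -
  have "v 1 = v (-1) + v (-1)" using rat_valuation_mult[OF assms, of "-1" "-1"] by simp
  then have "v (-1) = 0"
    using rat_valuation_one[OF assms] rat_valuation_finite[OF assms, of "-1"] by (cases "v (-1)") auto
  then show ?thesis using rat_valuation_mult[OF assms, of "-1" x] by simp
qed

lemma rat_valuation_add_eq_min:
  assumes v: "rat_valuation v" and le: "v (x + y) \<le> v y"
  shows "v (x + y) = min (v x) (v y)"
proof (cases "v x < v y")
  case True
  have "min (v (x + y)) (v (- y)) \<le> v x"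
    using rat_valuation_add[OF v, of "x + y" "- y"] by simp
  then have "v (x + y) \<le> v x" using True rat_valuation_uminus[OF v, of y] by (auto simp: min_le_iff_disj)
  then show ?thesis using True rat_valuation_add[OF v, of x y] by (auto simp: min_def)
next
  case False
  then show ?thesis using le rat_valuation_add[OF v, of x y] by (simp add: min_def split: if_splits)
qed

lemma subring_val_ring:
  assumes v: "rat_valuation v" and S: "subring_set S"
  shows "subring_set (val_ring S v)"
proof -
  have add: "0 \<le> v (x + y)" if "0 \<le> v x" "0 \<le> v y" for x y
    using that rat_valuation_add[OF v, of x y] by (auto simp: min_def split: if_splits)
  have "0 \<le> v (x - y)" if "0 \<le> v x" "0 \<le> v y" for x y
    using add[of x "- y"] that by (simp add: rat_valuation_uminus[OF v])
  moreover have "0 \<le> v (x * y)" if "0 \<le> v x" "0 \<le> v y" for x y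
    using that by (simp add: rat_valuation_mult[OF v])
  ultimately show ?thesis
    using S add rat_valuation_zero[OF v] rat_valuation_one[OF v]
    unfolding subring_set_def val_ring_def by simp
qed

lemma v0_le_lead_coeff:
  assumes "h \<noteq> 0" shows "v0 v h \<le> v (lead_coeff h)"
  using assms unfolding v0_def by (auto intro!: Min_le simp: last_coeffs_eq_coeff_degree[symmetric])

lemma divisor_polynomial_poly_le:
  assumes v: "rat_valuation v" and G: "divisor_polynomial Kp v fP t m G"
    and h: "h \<noteq> 0" "set (coeffs h) \<subseteq> val_ring Kp v" "degree h = m"
  shows "v (poly h t) \<le> v (lead_coeff h) + v (poly G t)"
proof -
  have "v0 v h \<in> v ` set (coeffs h)" unfolding v0_def using h(1) by (auto intro: Min_in)
  then have "v0 v h \<noteq> -\<infinity>" using rat_valuation_neq_MInfty[OF v] by force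
  moreover have "v0 v h \<noteq> \<infinity>"
    using v0_le_lead_coeff[OF h(1), of v] rat_valuation_finite[OF v, of "lead_coeff h"] h(1) by auto
  ultimately have "\<bar>v0 v h\<bar> \<noteq> \<infinity>" by auto
  moreover have "v (poly h t) - v0 v h \<le> v (poly G t)"
    using G h unfolding divisor_polynomial_def by blast
  ultimately have "v (poly h t) \<le> v0 v h + v (poly G t)"
    by (simp add: ereal_minus_le_iff add.commute)
  also have "\<dots> \<le> v (lead_coeff h) + v (poly G t)"
    by (intro add_right_mono v0_le_lead_coeff[OF h(1)])
  finally show ?thesis .
qed

lemma w_reduced_divisor_polynomials:
  assumes v: "rat_valuation v" and Kp: "subring_set Kp" and n: "0 < n"
    and G: "\<forall>j<n. divisor_polynomial Kp v fP t j (G j)"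
  shows "w_reduced v (val_ring Kp v) {..<n} (\<lambda>j. poly (G j) t)"
  unfolding w_reduced_def
proof (intro allI impI)
  fix b assume b: "\<forall>j\<in>{..<n}. b j \<in> val_ring Kp v"
  have G': "lead_coeff (G j) = 1" "degree (G j) = j" "set (coeffs (G j)) \<subseteq> val_ring Kp v"
    if "j < n" for j
    using G that unfolding divisor_polynomial_def by auto
  have "v (\<Sum>j<k. b j * poly (G j) t) = (MIN j\<in>{..<k}. v (b j * poly (G j) t))"
    if "0 < k" "k \<le> n" for k
    using that
  proof (induction k rule: nat_induct_non_zero)
    case 1
    show ?case by (simp add: lessThan_Suc)
  next
    case (Suc k)
    define S where "S = (\<Sum>j<k. b j * poly (G j) t)"
    define T where "T = b k * poly (G k) t"
    have "v (S + T) \<le> v T"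
    proof (cases "b k = 0")
      case False
      define h where "h = (\<Sum>j<Suc k. smult (b j) (G j))"
      have low: "degree (\<Sum>j<k. smult (b j) (G j)) < k"
        using Suc G' by (intro degree_sum_less) (auto intro: le_less_trans degree_smult_le)
      have deg_T: "degree (smult (b k) (G k)) = k" using False G' Suc.prems by simp
      have h_eq: "h = (\<Sum>j<k. smult (b j) (G j)) + smult (b k) (G k)" unfolding h_def by simp
      have deg_h: "degree h = k" unfolding h_eq using low deg_T by (simp add: degree_add_eq_right)
      have "lead_coeff h = lead_coeff (smult (b k) (G k))"
        unfolding h_eq using low deg_T by (intro lead_coeff_add_le) simp
      then have lead_h: "lead_coeff h = b k" using G' Suc.prems by simp
      then have "h \<noteq> 0" using False by auto
      moreover have "set (coeffs h) \<subseteq> val_ring Kp v"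
        unfolding h_def using b G' Suc.prems
        by (intro coeffs_sum_smult_subset subring_val_ring v Kp) auto
      ultimately have "v (poly h t) \<le> v (b k) + v (poly (G k) t)"
        using divisor_polynomial_poly_le[OF v, of Kp fP t k "G k" h] G Suc.prems deg_h lead_h by simp
      moreover have "poly h t = S + T" unfolding h_def S_def T_def by (simp add: poly_sum)
      ultimately show ?thesis by (simp add: T_def rat_valuation_mult[OF v])
    qed (simp add: T_def rat_valuation_zero[OF v])
    then have "v (S + T) = min (v S) (v T)" by (rule rat_valuation_add_eq_min[OF v])
    moreover have "(MIN j\<in>{..<Suc k}. v (b j * poly (G j) t)) = min (v S) (v T)"
      using Suc unfolding S_def T_def lessThan_Suc image_insert by (subst Min_insert) (auto simp: min.commute)
    ultimately show ?case unfolding S_def T_def by simp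
  qed
  then show "v (\<Sum>j\<in>{..<n}. b j * poly (G j) t) = (MIN j\<in>{..<n}. v (b j * poly (G j) t))"
    using n by simp
qed

lemma w_reduced_map_poly:
  assumes R: "subring_set A" and "\<phi> 0 = 0"
    and hom: "\<forall>x\<in>A. \<forall>y\<in>A. \<phi> (x + y) = \<phi> x + \<phi> y \<and> \<phi> (x * y) = \<phi> x * \<phi> y"
    and \<phi>_A: "\<phi> ` A \<subseteq> B" and g: "\<forall>i<n. set (coeffs (g i)) \<subseteq> A"
    and corr: "\<forall>h. set (coeffs h) \<subseteq> A \<longrightarrow> w (poly h \<theta>) = v (poly (map_poly \<phi> h) t)"
    and red: "w_reduced v B {..<n} (\<lambda>i. poly (map_poly \<phi> (g i)) t)"
  shows "w_reduced w A {..<n} (\<lambda>i. poly (g i) \<theta>)"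
  unfolding w_reduced_def
proof (intro allI impI)
  fix a assume a: "\<forall>i\<in>{..<n}. a i \<in> A"
  have summand: "w (a i * poly (g i) \<theta>) = v (\<phi> (a i) * poly (map_poly \<phi> (g i)) t)" if "i < n" for i
  proof -
    have "w (a i * poly (g i) \<theta>) = w (poly (\<Sum>j<Suc 0. smult (a i) (g i)) \<theta>)" by simp
    also have "\<dots> = v (poly (map_poly \<phi> (\<Sum>j<Suc 0. smult (a i) (g i))) t)"
      using a g that coeffs_sum_smult_subset[OF R, of "Suc 0" "\<lambda>_. a i" "\<lambda>_. g i"]
      by (intro corr[rule_format]) auto
    also have "map_poly \<phi> (\<Sum>j<Suc 0. smult (a i) (g i)) = (\<Sum>j<Suc 0. smult (\<phi> (a i)) (map_poly \<phi> (g i)))"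
      using a g that map_poly_sum_smult[OF R \<open>\<phi> 0 = 0\<close> hom, of "Suc 0" "\<lambda>_. a i" "\<lambda>_. g i"]
      by auto
    finally show ?thesis by simp
  qed
  have "w (\<Sum>i<n. a i * poly (g i) \<theta>) = w (poly (\<Sum>i<n. smult (a i) (g i)) \<theta>)"
    by (simp add: poly_sum)
  also have "\<dots> = v (poly (map_poly \<phi> (\<Sum>i<n. smult (a i) (g i))) t)"
    using a g coeffs_sum_smult_subset[OF R, of n a g] by (intro corr[rule_format]) auto
  also have "map_poly \<phi> (\<Sum>i<n. smult (a i) (g i)) = (\<Sum>i<n. smult (\<phi> (a i)) (map_poly \<phi> (g i)))"
    using a g by (intro map_poly_sum_smult[OF R \<open>\<phi> 0 = 0\<close> hom]) auto
  also have "v (poly \<dots> t) = (MIN i\<in>{..<n}. v (\<phi> (a i) * poly (map_poly \<phi> (g i)) t))"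
    using red a \<phi>_A unfolding w_reduced_def by (simp add: poly_sum image_subset_iff)
  also have "\<dots> = (MIN i\<in>{..<n}. w (a i * poly (g i) \<theta>))"
    using summand by simp
  finally show "w (\<Sum>i\<in>{..<n}. a i * poly (g i) \<theta>) = (MIN i\<in>{..<n}. w (a i * poly (g i) \<theta>))" by simp
qed

text \<open>A common denominator \<open>d\<close> of the coefficients shifts every value in the
  defining identity of reducedness by the same finite amount \<open>w d\<close>.\<close>

lemma w_reduced_fraction_field:
  fixes w :: "'a::field \<Rightarrow> ereal"
  assumes A: "subring_set A" and frac: "\<forall>k\<in>K. \<exists>a\<in>A. \<exists>b\<in>A. b \<noteq> 0 \<and> k = a / b"
    and I: "finite I"
    and mult: "\<And>d x. d \<noteq> 0 \<Longrightarrow> w (d * x) = w d + w x"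
    and fin: "\<And>d. d \<noteq> 0 \<Longrightarrow> \<bar>w d\<bar> \<noteq> \<infinity>"
    and red: "w_reduced w A I b"
  shows "w_reduced w K I b"
  unfolding w_reduced_def
proof (intro allI impI)
  fix c assume c: "\<forall>i\<in>I. c i \<in> K"
  show "w (\<Sum>i\<in>I. c i * b i) = (MIN i\<in>I. w (c i * b i))"
  proof (cases "I = {}")
    case True
    then show ?thesis using red unfolding w_reduced_def by simp
  next
    case False
    have "\<forall>i\<in>I. \<exists>x y. x \<in> A \<and> y \<in> A \<and> y \<noteq> 0 \<and> c i = x / y" using frac c by blast
    then obtain num den
      where nd: "\<And>i. i \<in> I \<Longrightarrow> num i \<in> A \<and> den i \<in> A \<and> den i \<noteq> 0 \<and> c i = num i / den i"
      by metis
    define d where "d = (\<Prod>i\<in>I. den i)"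
    have "d \<noteq> 0" unfolding d_def using I nd by auto
    have dc: "d * c i \<in> A" if "i \<in> I" for i
    proof -
      have "d = den i * (\<Prod>j\<in>I - {i}. den j)" unfolding d_def by (rule prod.remove[OF I that])
      then have "d * c i = num i * (\<Prod>j\<in>I - {i}. den j)" using nd[OF that] by simp
      moreover have "(\<Prod>j\<in>I - {i}. den j) \<in> A" using nd by (intro subring_prod_closed[OF A]) auto
      ultimately show ?thesis using A nd[OF that] unfolding subring_set_def by simp
    qed
    have "w d + w (\<Sum>i\<in>I. c i * b i) = w (\<Sum>i\<in>I. (d * c i) * b i)"
      by (simp add: mult[OF \<open>d \<noteq> 0\<close>, symmetric] sum_distrib_left mult.assoc)
    also have "\<dots> = (MIN i\<in>I. w ((d * c i) * b i))"
      using red[unfolded w_reduced_def, rule_format, of "\<lambda>i. d * c i"] dc by simp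
    also have "\<dots> = (MIN i\<in>I. w d + w (c i * b i))" by (simp add: mult[OF \<open>d \<noteq> 0\<close>] mult.assoc)
    also have "\<dots> = w d + (MIN i\<in>I. w (c i * b i))"
      using mono_Min_commute[of "\<lambda>x. w d + x" "(\<lambda>i. w (c i * b i)) ` I"] I False
      by (simp add: mono_def add_left_mono image_image)
    finally show ?thesis using fin[OF \<open>d \<noteq> 0\<close>] by (subst (asm) ereal_add_cancel_left) auto
  qed
qed

lemma normalized_dv_finite:
  "normalized_dv UNIV v \<Longrightarrow> d \<noteq> 0 \<Longrightarrow> \<exists>k::int. v d = ereal (of_int k)"
  unfolding normalized_dv_def by blast

lemma normalized_dv_divide_finite:
  assumes "normalized_dv UNIV v" and "0 < r" and "d \<noteq> 0"
  shows "\<bar>v d / ereal r\<bar> \<noteq> \<infinity>"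
  using normalized_dv_finite[OF assms(1,3)] \<open>0 < r\<close> by auto

lemma normalized_dv_divide_mult:
  assumes v: "normalized_dv UNIV v" and "0 < r" and "d \<noteq> 0"
  shows "v (d * x) / ereal r = v d / ereal r + v x / ereal r"
proof -
  obtain k :: int where k: "v d = ereal (of_int k)" using normalized_dv_finite[OF v \<open>d \<noteq> 0\<close>] by blast
  have "v 0 = \<infinity>" using v unfolding normalized_dv_def by blast
  then have "v x \<noteq> -\<infinity>" using normalized_dv_finite[OF v, of x] by (cases "x = 0") auto
  moreover have "v (d * x) = v d + v x" using v unfolding normalized_dv_def by blast
  ultimately show ?thesis using k \<open>0 < r\<close> by (cases "v x") (simp_all add: add_divide_distrib)
qed

theorem mainTheorem2:
  fixes A K :: "'l::field set"
    and f :: "'l poly" and \<theta> :: 'l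
    and p :: "'l set" and vp :: "'l \<Rightarrow> ereal"
    and P :: "'l set" and vP :: "'l \<Rightarrow> ereal" and e :: nat and wP :: "'l \<Rightarrow> ereal"
    and Kp :: "'c::field set" and emb :: "'l \<Rightarrow> 'c" and vhat :: "'c \<Rightarrow> ereal"
    and fP :: "'c poly" and \<theta>P :: 'c
    and g :: "nat \<Rightarrow> 'l poly"
  assumes ded: "dedekind_domain_frac A K"
    and f_monic: "lead_coeff f = 1" and f_A: "set (coeffs f) \<subseteq> A"
    and f_irr: "irreducible_over K f" and f_sep: "coprime f (pderiv f)"
    and f_root: "poly f \<theta> = 0"
    and L_gen: "\<forall>y. \<exists>h. set (coeffs h) \<subseteq> K \<and> y = poly h \<theta>"
    and p_prime: "prime_ideal_in A p" and p_nz: "p \<noteq> {0}"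
    and vp_dv: "normalized_dv K vp" and vp_ring: "val_ring K vp = localization A p"
    and P_prime: "prime_ideal_in (integral_closure A) P" and P_over: "P \<inter> A = p"
    and vP_dv: "normalized_dv UNIV vP"
    and vP_ring: "{y. 0 \<le> vP y} = localization (integral_closure A) P"
    and e_pos: "e > 0" and e_ram: "\<forall>a\<in>K. vP a = ereal (real e) * vp a"
    and wP_def: "\<forall>y. wP y = vP y / ereal (real e)"
    and compl: "completion_setup K vp Kp emb vhat"
    and fP_monic: "lead_coeff fP = 1"
    and fP_int: "set (coeffs fP) \<subseteq> val_ring Kp vhat"
    and fP_irr: "irreducible_over Kp fP"
    and fP_dvd: "fP dvd map_poly emb f"
    and \<theta>P_root: "poly fP \<theta>P = 0"
    and fP_corr: "\<forall>h. set (coeffs h) \<subseteq> A \<longrightarrow> wP (poly h \<theta>) = vhat (poly (map_poly emb h) \<theta>P)"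
    and g0: "g 0 = 1"
    and g_A: "\<forall>m<degree fP. set (coeffs (g m)) \<subseteq> A"
    and g_div: "\<forall>m<degree fP. divisor_polynomial Kp vhat fP \<theta>P m (map_poly emb (g m))"
  shows "w_reduced wP K {..<degree fP} (\<lambda>m. poly (g m) \<theta>)"
proof -
  have A: "subring_set A" "A \<subseteq> K" and frac: "\<forall>k\<in>K. \<exists>a\<in>A. \<exists>b\<in>A. b \<noteq> 0 \<and> k = a / b"
    using ded unfolding dedekind_domain_frac_def by auto
  have vhat: "rat_valuation vhat" and Kp: "subring_set Kp"
    and emb: "emb 0 = 0" "\<forall>x\<in>A. \<forall>y\<in>A. emb (x + y) = emb x + emb y \<and> emb (x * y) = emb x * emb y"
    and emb_val: "\<forall>a\<in>K. emb a \<in> Kp \<and> vhat (emb a) = vp a"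
    using compl A(2) unfolding completion_setup_def subfield_set_def by (auto 0 4)
  have "A \<subseteq> val_ring K vp"
    using subset_localization[OF A(1) p_prime] vp_ring by simp
  then have emb_A: "emb ` A \<subseteq> val_ring Kp vhat"
    using emb_val A(2) unfolding val_ring_def by auto
  have "0 < degree fP" using fP_irr unfolding irreducible_over_def by simp
  then have "w_reduced vhat (val_ring Kp vhat) {..<degree fP} (\<lambda>m. poly (map_poly emb (g m)) \<theta>P)"
    using g_div by (intro w_reduced_divisor_polynomials vhat Kp)
  then have "w_reduced wP A {..<degree fP} (\<lambda>m. poly (g m) \<theta>)"
    using g_A fP_corr by (intro w_reduced_map_poly[OF A(1) emb emb_A])
  moreover have "wP = (\<lambda>y. vP y / ereal (real e))" using wP_def by auto
  ultimately show ?thesis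
    using normalized_dv_divide_mult[OF vP_dv] normalized_dv_divide_finite[OF vP_dv] e_pos
    by (intro w_reduced_fraction_field[OF A(1) frac]) auto
qed

end
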